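(* Let $K=\mathbb{Q}(\rho)$, where $\rho$ is a root of $x^3-ax^2-(a+3)x-1$ with $a\equiv3$ or $21\pmod{27}$, $a>12$ and $\frac{a^2+3a+9}{27}$ square-free. Put $g_1=1$, $g_2=\rho$, $g_3=\frac{1+\rho+\rho^2}{3}$ and, for integers $v,r$, \[\alpha(v,r)=-(2v+1)g_1-(v(a+3)+r+1)g_2+(3v+2)g_3.\] Then: \begin{enumerate} \item $N(\alpha(v,r))<N(\alpha(v+1,r))$ for all $0\leq v\leq\frac{a-3}{9}-1$ and $\frac{a}{3}+2+v\leq r\leq\frac{2a}{3}-2v-3$; \item $N(\alpha(v,\frac{a}{3}+1+v))<N(\alpha(v+1,\frac{a}{3}+1+v+1))$ for all $0\leq v\leq\frac{a-3}{9}-1$; \item $N(\alpha(v,\frac{2a}{3}-2v-1))<N(\alpha(v+1,\frac{2a}{3}-2(v+1)-1))$ for all $0\leq v\leq\frac{a-3}{9}-2$; \item $N(\alpha(v,\frac{2a}{3}-2v-2))<N(\alpha(v+1,\frac{2a}{3}-2(v+1)-2))$ for all $0\leq v\leq\frac{a-3}{9}-2$. \end{enumerate}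
   Context: $N$ denotes the norm from $K$ to $\mathbb{Q}$. Note that the hypotheses imply $a\equiv 3\pmod 9$, so $\frac{a}{3}$ and $\frac{a-3}{9}$ are integers. *)

theory Defs
  imports Complex_Main "HOL-Computational_Algebra.Squarefree"
begin

definition cubic :: "int \<Rightarrow> complex \<Rightarrow> complex" where
  "cubic a x = x^3 - of_int a * x^2 - (of_int a + 3) * x - 1"

text \<open>An element c0*g1 + c1*g2 + c2*g3 of K, with g1 = 1, g2 = rho, g3 = (1+rho+rho^2)/3,
  evaluated at a conjugate x of rho.\<close>
definition elemK :: "rat \<Rightarrow> rat \<Rightarrow> rat \<Rightarrow> complex \<Rightarrow> complex" where
  "elemK c0 c1 c2 x = of_rat c0 + of_rat c1 * x + of_rat c2 * (1 + x + x^2) / 3"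

text \<open>Norm from K = Q(rho) to Q: product over the (three distinct) conjugates of rho,
  i.e. the complex roots of the cubic. The product is rational, hence real.\<close>
definition normK :: "int \<Rightarrow> rat \<Rightarrow> rat \<Rightarrow> rat \<Rightarrow> real" where
  "normK a c0 c1 c2 = Re (\<Prod>x\<in>{x. cubic a x = 0}. elemK c0 c1 c2 x)"

definition alpha :: "int \<Rightarrow> int \<Rightarrow> int \<Rightarrow> rat \<times> rat \<times> rat" where
  "alpha a v r = (of_int (-(2*v+1)), of_int (-(v*(a+3)+r+1)), of_int (3*v+2))"

definition N_alpha :: "int \<Rightarrow> int \<Rightarrow> int \<Rightarrow> real" where
  "N_alpha a v r = (case alpha a v r of (c0, c1, c2) \<Rightarrow> normK a c0 c1 c2)"

end

theory Submission
  imports Defs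
begin

text \<open>
  For \<open>a \<ge> 0\<close> the cubic has three distinct real roots, found by the intermediate value theorem;
  by Vieta their elementary symmetric functions are \<open>a\<close>, \<open>-(a+3)\<close> and \<open>1\<close>. Writing every element
  of \<open>K\<close> as \<open>A + B\<rho> + C\<rho>\<^sup>2\<close>, its norm is therefore a polynomial in its coordinates and \<open>a\<close>, and
  \<open>N(\<alpha>(v,r))\<close> becomes an explicit cubic polynomial in \<open>a, v, r\<close>. With \<open>a = 9k + 3\<close> and
  \<open>k = v + 2 + w\<close> (or \<open>v + 1 + w\<close>), each difference of norms to be compared is a polynomial in
  \<open>v, w \<ge> 0\<close> with positive coefficients. In the first statement \<open>r\<close> ranges over an interval, and
  there the difference is a concave quadratic in \<open>r\<close>, so it suffices to check the two endpoints.
\<close>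

lemma vieta_cubic:
  fixes p q s x1 x2 x3 :: "'a::idom"
  assumes distinct: "x1 \<noteq> x2" "x1 \<noteq> x3" "x2 \<noteq> x3"
    and roots: "\<And>x. x \<in> {x1, x2, x3} \<Longrightarrow> x^3 + p*x^2 + q*x + s = 0"
  shows "x1 + x2 + x3 = -p" "x1*x2 + x1*x3 + x2*x3 = q" "x1*x2*x3 = -s"
proof -
  define g where "g x y = x^2 + x*y + y^2 + p*(x + y) + q" for x y
  have divided_difference: "(x^3 + p*x^2 + q*x + s) - (y^3 + p*y^2 + q*y + s) = (x - y) * g x y"
    for x y by (simp add: g_def power2_eq_square power3_eq_cube algebra_simps)
  have g12: "g x1 x2 = 0" and g13: "g x1 x3 = 0"
    using divided_difference[of x1 x2] divided_difference[of x1 x3] roots distinct by auto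
  have "g x1 x2 - g x1 x3 = (x2 - x3) * (x1 + x2 + x3 + p)"
    by (simp add: g_def power2_eq_square algebra_simps)
  with g12 g13 distinct show e1: "x1 + x2 + x3 = -p" by (simp add: eq_neg_iff_add_eq_0)
  then have p: "p = -(x1 + x2 + x3)" by simp
  from g12 show e2: "x1*x2 + x1*x3 + x2*x3 = q"
    unfolding g_def p by (simp add: power2_eq_square algebra_simps)
  have "x1^3 + p*x1^2 + q*x1 + s = 0" using roots by simp
  then show "x1*x2*x3 = -s"
    unfolding p e2[symmetric]
    by (simp add: power2_eq_square power3_eq_cube algebra_simps eq_neg_iff_add_eq_0)
qed

lemma simplest_cubic_has_three_real_roots:
  fixes b :: real
  assumes "b \<ge> 0"
  obtains x1 x2 x3 where "x1 \<noteq> x2" "x1 \<noteq> x3" "x2 \<noteq> x3"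
    "\<And>x. x \<in> {x1, x2, x3} \<Longrightarrow> x^3 - b*x^2 - (b+3)*x - 1 = 0"
proof -
  define f where "f x = x^3 - b*x^2 - (b+3)*x - 1" for x
  have cont: "continuous_on S f" for S unfolding f_def by (intro continuous_intros)
  have "f (b+2) = (b+2)*(b+1) - 1"
    by (simp add: f_def power2_eq_square power3_eq_cube algebra_simps)
  also have "\<dots> \<ge> 0" using assms by (simp add: algebra_simps)
  finally have "f (b+2) \<ge> 0" .
  then obtain x3 where x3: "0 \<le> x3" "x3 \<le> b+2" "f x3 = 0"
    using IVT'[of f 0 0 "b+2"] cont assms by (auto simp: f_def)
  obtain x2 where x2: "-1 \<le> x2" "x2 \<le> 0" "f x2 = 0"
    using IVT2'[of f 0 0 "-1"] cont assms by (auto simp: f_def)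
  obtain x1 where x1: "-2 \<le> x1" "x1 \<le> -1" "f x1 = 0"
    using IVT'[of f "-2" 0 "-1"] cont assms by (auto simp: f_def)
  have "f (-1) \<noteq> 0" "f 0 \<noteq> 0" by (simp_all add: f_def)
  with x1 x2 x3 have "x1 \<noteq> x2" "x1 \<noteq> x3" "x2 \<noteq> x3" by auto
  with x1 x2 x3 show ?thesis using that[of x1 x2 x3] by (auto simp: f_def)
qed

lemma of_rat_complex: "(of_rat q :: complex) = of_real (of_rat q)"
  by (cases q) (simp add: of_rat_rat)

definition norm_form :: "real \<Rightarrow> real \<Rightarrow> real \<Rightarrow> real \<Rightarrow> real \<Rightarrow> real \<Rightarrow> real" where
  "norm_form A B C e1 e2 e3 = C^3*e3^2 + B*C^2*e2*e3 + B^2*C*e1*e3 + B^3*e3 + A*C^2*e2^2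
     - 2*A*C^2*e1*e3 - 3*A*B*C*e3 + A*B*C*e1*e2 + A*B^2*e2 - 2*A^2*C*e2 + A^2*C*e1^2
     + A^2*B*e1 + A^3"

lemma prod_quadratic_eq_norm_form:
  "(A + B*x1 + C*x1^2) * (A + B*x2 + C*x2^2) * (A + B*x3 + C*x3^2)
     = norm_form A B C (x1 + x2 + x3) (x1*x2 + x1*x3 + x2*x3) (x1*x2*x3)"
  unfolding norm_form_def by (simp add: power2_eq_square power3_eq_cube algebra_simps)

lemma normK_eq_norm_form:
  assumes "a \<ge> 0"
  shows "normK a c0 c1 c2 = norm_form (of_rat c0 + of_rat c2 / 3) (of_rat c1 + of_rat c2 / 3)
           (of_rat c2 / 3) (of_int a) (-(of_int a + 3)) 1"
proof -
  obtain x1 x2 x3 :: real where distinct: "x1 \<noteq> x2" "x1 \<noteq> x3" "x2 \<noteq> x3"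
    and roots: "\<And>x. x \<in> {x1, x2, x3} \<Longrightarrow> x^3 - of_int a*x^2 - (of_int a + 3)*x - 1 = 0"
    using simplest_cubic_has_three_real_roots[of "of_int a"] assms by auto
  have "x^3 + (- of_int a)*x^2 + (-(of_int a + 3))*x + (-1) = 0" if "x \<in> {x1, x2, x3}" for x
    using roots[OF that] by (simp add: algebra_simps)
  from vieta_cubic[OF distinct this]
  have e1: "x1 + x2 + x3 = of_int a" and e2: "x1*x2 + x1*x3 + x2*x3 = -(of_int a + 3)"
    and e3: "x1*x2*x3 = 1" by simp_all
  have "cubic a z = (z - of_real x1) * (z - of_real x2) * (z - of_real x3)" for z
  proof -
    have "(z - of_real x1) * (z - of_real x2) * (z - of_real x3) = z^3 - of_real (x1 + x2 + x3) * z^2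
        + of_real (x1*x2 + x1*x3 + x2*x3) * z - of_real (x1*x2*x3)"
      by (simp add: power2_eq_square power3_eq_cube algebra_simps)
    also have "\<dots> = cubic a z" unfolding e1 e2 e3 cubic_def by (simp add: algebra_simps)
    finally show ?thesis by simp
  qed
  then have conjugates: "{x. cubic a x = 0} = of_real ` {x1, x2, x3}" by auto
  define A B C :: real
    where "A = of_rat c0 + of_rat c2 / 3" and "B = of_rat c1 + of_rat c2 / 3" and "C = of_rat c2 / 3"
  have "elemK c0 c1 c2 (of_real x) = of_real (A + B*x + C*x^2)" for x
    unfolding elemK_def A_def B_def C_def of_rat_complex by (simp add: power2_eq_square algebra_simps)
  then have "normK a c0 c1 c2 = (A + B*x1 + C*x1^2) * (A + B*x2 + C*x2^2) * (A + B*x3 + C*x3^2)"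
    unfolding normK_def conjugates using distinct
    by (simp add: prod.reindex del: of_real_add of_real_mult of_real_power)
  also have "\<dots> = norm_form A B C (of_int a) (-(of_int a + 3)) 1"
    unfolding prod_quadratic_eq_norm_form e1 e2 e3 ..
  finally show ?thesis unfolding A_def B_def C_def .
qed

definition N_alpha_poly :: "real \<Rightarrow> real \<Rightarrow> real \<Rightarrow> real" where
  "N_alpha_poly a v r = v^3 - 3*v*r^2 + 3*v*r - v - r^3 + r - 1/3
     + a * (- v*r^2 - v^2*r + r^2 + 3*v*r - 4/3*v + 1/3*r - 4/9)
     + a^2 * (1/3*v^2 + v*r - 7/9*v - 2/9*r - 4/27)
     - 2/9 * a^3 * v"

lemma N_alpha_eq_poly:
  assumes "a \<ge> 0"
  shows "N_alpha a v r = N_alpha_poly (of_int a) (of_int v) (of_int r)"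
  unfolding N_alpha_def alpha_def prod.case normK_eq_norm_form[OF assms] of_rat_of_int_eq
    norm_form_def N_alpha_poly_def
  by (simp add: power2_eq_square power3_eq_cube field_simps)

lemma N_alpha_poly_step_v:
  "N_alpha_poly a (v+1) r - N_alpha_poly a v r
     = (3*v^2 + 3*v - 4/3*a - 4/9*a^2 + 2/3*a^2*v - 2/9*a^3) + (a^2 + 2*a - 2*a*v + 3)*r - (a+3)*r^2"
  unfolding N_alpha_poly_def by (simp add: power2_eq_square power3_eq_cube field_simps)

lemma concave_quadratic_pos_between:
  fixes c0 c1 c2 L U r :: real
  assumes "c2 \<ge> 0" "L \<le> r" "r \<le> U"
    and "0 < c0 + c1*L - c2*L^2" "0 < c0 + c1*U - c2*U^2"
  shows "0 < c0 + c1*r - c2*r^2"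
proof (cases "L = U")
  case True
  with assms show ?thesis by simp
next
  case False
  define q where "q x = c0 + c1*x - c2*x^2" for x
  have "L < U" using False assms by simp
  have interpolation: "(U - L) * q r = (U - r) * q L + (r - L) * q U + c2 * (U - L) * (r - L) * (U - r)"
    unfolding q_def by (simp add: power2_eq_square algebra_simps)
  have "0 < (U - r) * q L + (r - L) * q U"
    using assms \<open>L < U\<close> unfolding q_def
    by (smt (verit) mult_pos_pos mult_nonneg_nonneg)
  moreover have "0 \<le> c2 * (U - L) * (r - L) * (U - r)"
    using assms by simp
  ultimately have "0 < (U - L) * q r" unfolding interpolation by linarith
  with \<open>L < U\<close> show ?thesis by (simp add: q_def zero_less_mult_iff)
qed

lemma N_alpha_poly_step_interior:
  fixes k v r :: real
  assumes "0 \<le> v" "v + 2 \<le> k" "3*k + v + 3 \<le> r" "r \<le> 6*k - 2*v - 1"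
  shows "N_alpha_poly (9*k+3) v r < N_alpha_poly (9*k+3) (v+1) r"
proof -
  obtain w where "0 \<le> w" and k: "k = v + 2 + w"
    using assms(2) by (intro that[of "k - v - 2"]) auto
  define a where "a = 9*k + 3"
  define c0 where "c0 = 3*v^2 + 3*v - 4/3*a - 4/9*a^2 + 2/3*a^2*v - 2/9*a^3"
  define c1 where "c1 = a^2 + 2*a - 2*a*v + 3"
  have "c0 + c1*(3*k + v + 3) - (a+3)*(3*k + v + 3)^2
      = 148 + 144*v + 36*v^2 + 171*w + 144*w*v + 27*w*v^2 + 45*w^2 + 27*w^2*v"
    unfolding c0_def c1_def a_def k by (simp add: power2_eq_square power3_eq_cube field_simps)
  also have "\<dots> > 0"
    using \<open>0 \<le> v\<close> \<open>0 \<le> w\<close> by (intro add_pos_nonneg mult_nonneg_nonneg) auto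
  finally have lower: "0 < c0 + c1*(3*k + v + 3) - (a+3)*(3*k + v + 3)^2" .
  have "c0 + c1*(6*k - 2*v - 1) - (a+3)*(6*k - 2*v - 1)^2
      = 160 + 108*v + 18*v^2 + 189*w + 72*w*v + 45*w^2"
    unfolding c0_def c1_def a_def k by (simp add: power2_eq_square power3_eq_cube field_simps)
  also have "\<dots> > 0"
    using \<open>0 \<le> v\<close> \<open>0 \<le> w\<close> by (intro add_pos_nonneg mult_nonneg_nonneg) auto
  finally have upper: "0 < c0 + c1*(6*k - 2*v - 1) - (a+3)*(6*k - 2*v - 1)^2" .
  have "a + 3 \<ge> 0" using assms k \<open>0 \<le> w\<close> unfolding a_def by simp
  from concave_quadratic_pos_between[OF this assms(3,4) lower upper]
  show ?thesis using N_alpha_poly_step_v[of a v r] unfolding a_def c0_def c1_def by simp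
qed

lemma N_alpha_poly_step_lower_edge:
  fixes k v :: real
  assumes "0 \<le> v" "v + 1 \<le> k"
  shows "N_alpha_poly (9*k+3) v (3*k + v + 2) < N_alpha_poly (9*k+3) (v+1) (3*k + v + 3)"
proof -
  obtain w where "0 \<le> w" and k: "k = v + 1 + w"
    using assms(2) by (intro that[of "k - v - 1"]) auto
  have "N_alpha_poly (9*k+3) (v+1) (3*k + v + 3) - N_alpha_poly (9*k+3) v (3*k + v + 2)
      = 36 + 63*v + 27*v^2 + 108*w + 162*w*v + 54*w*v^2 + 54*w^2 + 54*w^2*v"
    unfolding N_alpha_poly_def k by (simp add: power2_eq_square power3_eq_cube field_simps)
  also have "\<dots> > 0"
    using \<open>0 \<le> v\<close> \<open>0 \<le> w\<close> by (intro add_pos_nonneg mult_nonneg_nonneg) auto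
  finally show ?thesis by simp
qed

lemma N_alpha_poly_step_upper_edge:
  fixes k v :: real
  assumes "0 \<le> v" "v + 2 \<le> k"
  shows "N_alpha_poly (9*k+3) v (6*k - 2*v + 1) < N_alpha_poly (9*k+3) (v+1) (6*k - 2*v - 1)"
proof -
  obtain w where "0 \<le> w" and k: "k = v + 2 + w"
    using assms(2) by (intro that[of "k - v - 2"]) auto
  have "N_alpha_poly (9*k+3) (v+1) (6*k - 2*v - 1) - N_alpha_poly (9*k+3) v (6*k - 2*v + 1)
      = 198 + 216*v + 54*v^2 + 279*w + 270*w*v + 54*w*v^2 + 81*w^2 + 54*w^2*v"
    unfolding N_alpha_poly_def k by (simp add: power2_eq_square power3_eq_cube field_simps)
  also have "\<dots> > 0"
    using \<open>0 \<le> v\<close> \<open>0 \<le> w\<close> by (intro add_pos_nonneg mult_nonneg_nonneg) auto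
  finally show ?thesis by simp
qed

lemma N_alpha_poly_step_below_upper_edge:
  fixes k v :: real
  assumes "0 \<le> v" "v + 2 \<le> k"
  shows "N_alpha_poly (9*k+3) v (6*k - 2*v) < N_alpha_poly (9*k+3) (v+1) (6*k - 2*v - 2)"
proof -
  obtain w where "0 \<le> w" and k: "k = v + 2 + w"
    using assms(2) by (intro that[of "k - v - 2"]) auto
  have "N_alpha_poly (9*k+3) (v+1) (6*k - 2*v - 2) - N_alpha_poly (9*k+3) v (6*k - 2*v)
      = 162 + 135*v + 27*v^2 + 324*w + 270*w*v + 54*w*v^2 + 108*w^2 + 54*w^2*v"
    unfolding N_alpha_poly_def k by (simp add: power2_eq_square power3_eq_cube field_simps)
  also have "\<dots> > 0"
    using \<open>0 \<le> v\<close> \<open>0 \<le> w\<close> by (intro add_pos_nonneg mult_nonneg_nonneg) auto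
  finally show ?thesis by simp
qed

theorem lemma7p3:
  fixes a :: int
  assumes "a mod 27 = 3 \<or> a mod 27 = 21"
    and "a > 12"
    and "squarefree ((a^2 + 3*a + 9) div 27)"
  shows "(\<forall>v r. 0 \<le> v \<and> v \<le> (a-3) div 9 - 1 \<and> a div 3 + 2 + v \<le> r \<and> r \<le> 2*a div 3 - 2*v - 3
            \<longrightarrow> N_alpha a v r < N_alpha a (v+1) r)
       \<and> (\<forall>v. 0 \<le> v \<and> v \<le> (a-3) div 9 - 1
            \<longrightarrow> N_alpha a v (a div 3 + 1 + v) < N_alpha a (v+1) (a div 3 + 1 + v + 1))
       \<and> (\<forall>v. 0 \<le> v \<and> v \<le> (a-3) div 9 - 2
            \<longrightarrow> N_alpha a v (2*a div 3 - 2*v - 1) < N_alpha a (v+1) (2*a div 3 - 2*(v+1) - 1))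
       \<and> (\<forall>v. 0 \<le> v \<and> v \<le> (a-3) div 9 - 2
            \<longrightarrow> N_alpha a v (2*a div 3 - 2*v - 2) < N_alpha a (v+1) (2*a div 3 - 2*(v+1) - 2))"
proof -
  \<comment> \<open>Only \<open>a \<equiv> 3 (mod 9)\<close> and \<open>a \<ge> 0\<close> are used.\<close>
  have "a = 9 * ((a - 3) div 9) + 3" using assms(1) by presburger
  then obtain k where a: "a = 9*k + 3" by blast
  have k: "(a - 3) div 9 = k" "a div 3 = 3*k + 1" "2*a div 3 = 6*k + 2"
    unfolding a by simp_all
  have N: "N_alpha a v r = N_alpha_poly (9 * of_int k + 3) (of_int v) (of_int r)" for v r
    using N_alpha_eq_poly[of a v r] assms(2) unfolding a by simp
  show ?thesis unfolding k N
  proof (intro conjI allI impI, goal_cases)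
    case (1 v r)
    then have "v + 2 \<le> k" by presburger
    then have "real_of_int v + 2 \<le> of_int k" by linarith
    with 1 show ?case using N_alpha_poly_step_interior[of "of_int v" "of_int k" "of_int r"] by simp
  next
    case (2 v)
    then show ?case using N_alpha_poly_step_lower_edge[of "of_int v" "of_int k"] by (simp add: ac_simps)
  next
    case (3 v)
    then show ?case using N_alpha_poly_step_upper_edge[of "of_int v" "of_int k"] by (simp add: algebra_simps)
  next
    case (4 v)
    then show ?case
      using N_alpha_poly_step_below_upper_edge[of "of_int v" "of_int k"] by (simp add: algebra_simps)
  qed
qed

end
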